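(* Let $\mathcal{A}=(T(\Sigma,X),\Rightarrow_\Pi)$ be an abstract reduction system closed under substitutions, and let $(u_1\Rightarrow_{w_1}v_1,\ u_2\Rightarrow_{w_2}v_2)$ be a recurrent pair in $\mathcal{A}$, with $c_1,c_2,x,y,s,t,n_1,n_2,n_3,n_4$ as in the definition of recurrent pair. Then for all $m,n\in\mathbb{N}$, $c_1[m,n+1]\Rightarrow_{w_1}c_1[m+n_1,n]$. Consequently, for all $m,n\in\mathbb{N}$ with $n\ge n_2$, $c_1[m,n]\Rightarrow_{w_1}^{\,n-n_2}c_1[m+(n-n_2)\times n_1,\ n_2]$.
   Context: Fix a signature $\Sigma$, a countably infinite set $X$ of variables disjoint from $\Sigma$, and two distinct fresh hole constants $\square,\square'\notin\Sigma\cup X$. Terms are elements of $T(\Sigma,X)$; substitutions $\theta$ (maps $X\to T(\Sigma,X)$ moving finitely many variables) act homomorphically; $\mathit{Var}$ denotes the variable set. An abstract reduction system $(A,\Rightarrow_\Pi)$ has $\Rightarrow_\Pi=\bigcup_{\pi\in\Pi}\Rightarrow_\pi$; for $w=\langle\pi_1,\dots,\pi_k\rangle\in\Pi^*$, $\Rightarrow_w=\Rightarrow_{\pi_1}\circ\cdots\circ\Rightarrow_{\pi_k}$ ($\Rightarrow_\epsilon$ the identity), and $\Rightarrow_w^k$ is the $k$-fold composition of $\Rightarrow_w$ ($\Rightarrow_w^0$ the identity). It is closed under substitutions if for all $s,t\in A$, $w\in\Pi^*$ and substitutions $\theta$, $s\Rightarrow_w t$ implies $s\theta\Rightarrow_w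 t\theta$. Let $c_1$ be a term over $\Sigma\cup\{\square,\square'\}$ and $X$ containing at least one occurrence of $\square$ and of $\square'$, and $c_1[t,t']$ the result of replacing all $\square$ by $t$ and all $\square'$ by $t'$. Let $c_2$ be a term over $\Sigma\cup\{\square\}$ and $X$ containing at least one $\square$ (and no $\square'$), $c_2[t]$ the result of replacing all $\square$ by $t$, $c_2^0[t]=t$, $c_2^{k+1}[t]=c_2[c_2^k[t]]$. A recurrent pair in $\mathcal{A}$ is a pair of chains $u_1\Rightarrow_{w_1}v_1$ and $u_2\Rightarrow_{w_2}v_2$ ($w_1,w_2\in\Pi^*$) such that: $u_1=c_1[x,c_2[y]]$, $v_1=c_1[c_2^{n_1}[x],y]$, $u_2=c_1[x,c_2^{n_2}[s]]$, $v_2=c_1[c_2^{n_3}[t],c_2^{n_4}[x]]$ for variables $x\neq y$ with $\{x,y\}\cap\mathit{Var}(c_1)=\emptyset$, a term $s$, naturals $n_1,n_2,n_3,n_4$; $\mathit{Var}(c_2)=\mathit{Var}(s)=\emptyset$; $t\in\{x,s\}$; and $n_4\ge n_2$. For $m,n\in\mathbb{N}$, $c_1[m,n]$ denotes the term $c_1[c_2^m[s],c_2^n[s]]$. *)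

theory Defs
  imports Main "HOL-Library.Countable_Set"
begin

datatype ('f, 'v) "term" = Var 'v | Fun 'f "('f, 'v) term list"

fun vars_term :: "('f, 'v) term \<Rightarrow> 'v set" where
  "vars_term (Var x) = {x}"
| "vars_term (Fun f ts) = (\<Union>t \<in> set ts. vars_term t)"

fun subst_apply :: "('f, 'v) term \<Rightarrow> ('v \<Rightarrow> ('f, 'v) term) \<Rightarrow> ('f, 'v) term" where
  "subst_apply (Var x) \<theta> = \<theta> x"
| "subst_apply (Fun f ts) \<theta> = Fun f (map (\<lambda>t. subst_apply t \<theta>) ts)"

definition is_subst :: "('v \<Rightarrow> ('f, 'v) term) \<Rightarrow> bool" where
  "is_subst \<theta> \<longleftrightarrow> finite {x. \<theta> x \<noteq> Var x}"

fun steps :: "('p \<Rightarrow> 'a \<Rightarrow> 'a \<Rightarrow> bool) \<Rightarrow> 'p list \<Rightarrow> 'a \<Rightarrow> 'a \<Rightarrow> bool" where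
  "steps R [] s t \<longleftrightarrow> s = t"
| "steps R (p # w) s t \<longleftrightarrow> (\<exists>u. R p s u \<and> steps R w u t)"

definition closed_under_subst ::
  "'p set \<Rightarrow> ('p \<Rightarrow> ('f, 'v) term \<Rightarrow> ('f, 'v) term \<Rightarrow> bool) \<Rightarrow> bool" where
  "closed_under_subst Pi R \<longleftrightarrow>
     (\<forall>s t w \<theta>. set w \<subseteq> Pi \<longrightarrow> is_subst \<theta> \<longrightarrow> steps R w s t \<longrightarrow>
        steps R w (subst_apply s \<theta>) (subst_apply t \<theta>))"

text \<open>Terms over \<Sigma> \<union> {\<box>, \<box>'} and X: the hole constants are represented as
  extra (nullary) leaves Hole, Hole' distinct from all variables and symbols.\<close>
datatype 'v hv = HVar 'v | Hole | Hole'

fun fill :: "('f, 'v hv) term \<Rightarrow> ('f, 'v) term \<Rightarrow> ('f, 'v) term \<Rightarrow> ('f, 'v) term" where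
  "fill (Var (HVar x)) t t' = Var x"
| "fill (Var Hole) t t' = t"
| "fill (Var Hole') t t' = t'"
| "fill (Fun f cs) t t' = Fun f (map (\<lambda>c. fill c t t') cs)"

definition fill1 :: "('f, 'v hv) term \<Rightarrow> ('f, 'v) term \<Rightarrow> ('f, 'v) term" where
  "fill1 c t = fill c t t"

fun cpow :: "('f, 'v hv) term \<Rightarrow> nat \<Rightarrow> ('f, 'v) term \<Rightarrow> ('f, 'v) term" where
  "cpow c 0 t = t"
| "cpow c (Suc k) t = fill1 c (cpow c k t)"

definition ctxt_vars :: "('f, 'v hv) term \<Rightarrow> 'v set" where
  "ctxt_vars c = {x. HVar x \<in> vars_term c}"

definition has_hole :: "('f, 'v hv) term \<Rightarrow> bool" where
  "has_hole c \<longleftrightarrow> Hole \<in> vars_term c"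

definition has_hole' :: "('f, 'v hv) term \<Rightarrow> bool" where
  "has_hole' c \<longleftrightarrow> Hole' \<in> vars_term c"

definition recurrent_pair ::
  "'p set \<Rightarrow> ('p \<Rightarrow> ('f, 'v) term \<Rightarrow> ('f, 'v) term \<Rightarrow> bool)
   \<Rightarrow> ('f, 'v) term \<Rightarrow> 'p list \<Rightarrow> ('f, 'v) term
   \<Rightarrow> ('f, 'v) term \<Rightarrow> 'p list \<Rightarrow> ('f, 'v) term
   \<Rightarrow> ('f, 'v hv) term \<Rightarrow> ('f, 'v hv) term \<Rightarrow> 'v \<Rightarrow> 'v
   \<Rightarrow> ('f, 'v) term \<Rightarrow> ('f, 'v) term \<Rightarrow> nat \<Rightarrow> nat \<Rightarrow> nat \<Rightarrow> nat \<Rightarrow> bool" where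
  "recurrent_pair Pi R u1 w1 v1 u2 w2 v2 c1 c2 x y s t n1 n2 n3 n4 \<longleftrightarrow>
     has_hole c1 \<and> has_hole' c1 \<and> has_hole c2 \<and> \<not> has_hole' c2 \<and>
     set w1 \<subseteq> Pi \<and> set w2 \<subseteq> Pi \<and>
     steps R w1 u1 v1 \<and> steps R w2 u2 v2 \<and>
     u1 = fill c1 (Var x) (fill1 c2 (Var y)) \<and>
     v1 = fill c1 (cpow c2 n1 (Var x)) (Var y) \<and>
     u2 = fill c1 (Var x) (cpow c2 n2 s) \<and>
     v2 = fill c1 (cpow c2 n3 t) (cpow c2 n4 (Var x)) \<and>
     x \<noteq> y \<and> x \<notin> ctxt_vars c1 \<and> y \<notin> ctxt_vars c1 \<and>
     ctxt_vars c2 = {} \<and> vars_term s = {} \<and>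
     (t = Var x \<or> t = s) \<and> n4 \<ge> n2"

text \<open>c1[m,n] = c1[c2^m[s], c2^n[s]].\<close>
definition c1mn :: "('f, 'v hv) term \<Rightarrow> ('f, 'v hv) term \<Rightarrow> ('f, 'v) term
    \<Rightarrow> nat \<Rightarrow> nat \<Rightarrow> ('f, 'v) term" where
  "c1mn c1 c2 s m n = fill c1 (cpow c2 m s) (cpow c2 n s)"

end

theory Submission
  imports Defs
begin

text \<open>Instantiating x by c2^m[s] and y by c2^n[s] in the first chain u1 \<Rightarrow>w1 v1 of the
  recurrent pair gives the single step c1[m, n+1] \<Rightarrow>w1 c1[m+n1, n]: c2 is ground and x, y do
  not occur in c1, so the substitution passes through both contexts. Iterating this
  step n - n2 times gives the second claim.\<close>

lemma subst_apply_fill: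
  assumes "\<forall>z\<in>ctxt_vars c. \<theta> z = Var z"
  shows "subst_apply (fill c a b) \<theta> = fill c (subst_apply a \<theta>) (subst_apply b \<theta>)"
  using assms by (induction c a b rule: fill.induct) (auto simp: ctxt_vars_def)

lemma subst_apply_fill1:
  "ctxt_vars c = {} \<Longrightarrow> subst_apply (fill1 c a) \<theta> = fill1 c (subst_apply a \<theta>)"
  unfolding fill1_def by (rule subst_apply_fill) auto

lemma subst_apply_cpow:
  "ctxt_vars c = {} \<Longrightarrow> subst_apply (cpow c k a) \<theta> = cpow c k (subst_apply a \<theta>)"
  by (induction k) (auto simp: subst_apply_fill1)

lemma cpow_cpow: "cpow c k (cpow c j a) = cpow c (j + k) a"
  by (induction k) auto

lemma is_subst_fun_upd2: "is_subst (Var(x := a, y := b))"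
  unfolding is_subst_def by (rule finite_subset[of _ "{x, y}"]) auto

lemma relpowp_shift_iterate:
  assumes step: "\<And>m n. r (f m (Suc n)) (f (m + d) n)"
  shows "(r ^^ k) (f m (n0 + k)) (f (m + k * d) n0)"
proof (induction k arbitrary: m)
  case 0
  then show ?case by simp
next
  case (Suc k)
  have "(r ^^ k) (f (m + d) (n0 + k)) (f (m + Suc k * d) n0)"
    using Suc.IH[of "m + d"] by (simp add: add.assoc)
  with step[of m "n0 + k"] have "(r ^^ Suc k) (f m (Suc (n0 + k))) (f (m + Suc k * d) n0)"
    by (rule relpowp_Suc_I2)
  then show ?case
    by simp
qed

lemma recurrent_pair_step:
  assumes closed: "closed_under_subst Pi R"
    and rp: "recurrent_pair Pi R u1 w1 v1 u2 w2 v2 c1 c2 x y s t n1 n2 n3 n4"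
  shows "steps R w1 (c1mn c1 c2 s m (Suc n)) (c1mn c1 c2 s (m + n1) n)"
proof -
  define \<theta> where "\<theta> = Var(x := cpow c2 m s, y := cpow c2 n s)"
  note rp = rp[unfolded recurrent_pair_def]
  have fixes_c1: "\<forall>z\<in>ctxt_vars c1. \<theta> z = Var z"
    using rp by (auto simp: \<theta>_def)
  have "steps R w1 (subst_apply u1 \<theta>) (subst_apply v1 \<theta>)"
    using closed rp is_subst_fun_upd2[of x _ y] unfolding closed_under_subst_def \<theta>_def
    by blast
  moreover have "subst_apply u1 \<theta> = c1mn c1 c2 s m (Suc n)"
    using rp fixes_c1 by (simp add: subst_apply_fill subst_apply_fill1 c1mn_def \<theta>_def)
  moreover have "subst_apply v1 \<theta> = c1mn c1 c2 s (m + n1) n"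
    using rp fixes_c1
    by (simp add: subst_apply_fill subst_apply_cpow cpow_cpow c1mn_def \<theta>_def add.commute)
  ultimately show ?thesis by simp
qed

theorem lemma10:
  fixes Pi :: "'p set"
    and R :: "'p \<Rightarrow> ('f, 'v) term \<Rightarrow> ('f, 'v) term \<Rightarrow> bool"
  assumes "infinite (UNIV :: 'v set)" and "countable (UNIV :: 'v set)"
    and "closed_under_subst Pi R"
    and "recurrent_pair Pi R u1 w1 v1 u2 w2 v2 c1 c2 x y s t n1 n2 n3 n4"
  shows "(\<forall>m n. steps R w1 (c1mn c1 c2 s m (n + 1)) (c1mn c1 c2 s (m + n1) n))
    \<and> (\<forall>m n. n \<ge> n2 \<longrightarrow>
          ((steps R w1) ^^ (n - n2)) (c1mn c1 c2 s m n)
            (c1mn c1 c2 s (m + (n - n2) * n1) n2))"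
proof (intro conjI allI impI)
  note step = recurrent_pair_step[OF assms(3,4)]
  fix m n
  show "steps R w1 (c1mn c1 c2 s m (n + 1)) (c1mn c1 c2 s (m + n1) n)"
    using step by simp
  assume "n2 \<le> n"
  then show "((steps R w1) ^^ (n - n2)) (c1mn c1 c2 s m n) (c1mn c1 c2 s (m + (n - n2) * n1) n2)"
    using relpowp_shift_iterate[of "steps R w1" "c1mn c1 c2 s" n1 "n - n2" m n2, OF step]
    by simp
qed

end
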